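(* For every $\lambda\in\mathscr{SP}(n)$, the minimal length representative of the coset $v(\lambda)W_P$ equals $u_{\lambda^*}$.
   Context: $W_{\mathrm{af}}$ is the affine Weyl group of type $C_n^{(1)}$ generated by $s_0,\dots,s_n$; $W=\langle s_1,\dots,s_n\rangle$ acts on $X^\vee=\bigoplus_{i=1}^n\mathbb{Z}\varepsilon_i$ ($s_i$ swaps $\varepsilon_i,\varepsilon_{i+1}$ for $i<n$; $s_n$ negates $\varepsilon_n$); $Q^\vee$ the coroot lattice spanned by $\varepsilon_i-\varepsilon_{i+1}$ and $\varepsilon_n$; $W_{\mathrm{af}}\cong W\ltimes Q^\vee$ (elements $wt_\xi$, $wt_\xi w^{-1}=t_{w\xi}$), $s_0=s_\theta t_{-\varepsilon_1}$ with $s_\theta=s_1\cdots s_{n-1}s_ns_{n-1}\cdots s_1$. $W_P=\langle s_1,\dots,s_{n-1}\rangle$. $\rho_i=s_{i-1}\cdots s_1s_0$ for $1\le i\le n$. $\mathscr{SP}(n)$ is the set of strict partitions $\lambda=(\lambda_1>\dots>\lambda_l>0)$ with $\lambda_1\le n$; $x_\lambda=\rho_{\lambda_l}\cdots\rho_{\lambda_1}$, and $v(\lambda)\in W$ is defined by $x_\lambda=v(\lambda)t_{-\xi}$ for some $\xi\in Q^\vee$. For $1\le k\le n$, $u_k=s_{n+1-k}\cdots s_{n-1}s_n$, and $u_\lambda=u_{\lambda_l}\cdots u_{\lambda_1}$. $\lambda^*=(n+1-\lambda_l,\dots,n+1-\lambda_1)$. *)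

theory Defs
  imports Main
begin

text \<open>
Vectors of the coweight lattice X = Z^n are modelled as functions
nat => int whose support lies in {1..n} (coordinate j is the coefficient of eps_j).
Elements of the affine Weyl group W_af = W semidirect Q are modelled faithfully as
affine maps of X: the element w t_xi acts by x |-> w(x + xi), so that the product
in W_af is function composition.  All generators act as the identity on coordinates
outside {1..n}, hence equality of group elements is equality of functions.
\<close>

type_synonym vec = "nat \<Rightarrow> int"
type_synonym elt = "vec \<Rightarrow> vec"

definition trans :: "vec \<Rightarrow> elt" where
  "trans \<xi> = (\<lambda>x j. x j + \<xi> j)"

definition eps :: "nat \<Rightarrow> vec" where
  "eps i = (\<lambda>j. if j = i then 1 else 0)"

definition sfin :: "nat \<Rightarrow> nat \<Rightarrow> elt" where
  "sfin n i = (if i = n then (\<lambda>x. x(n := - x n))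
               else (\<lambda>x j. x (if j = i then i + 1 else if j = i + 1 then i else j)))"

definition wordfin :: "nat \<Rightarrow> nat list \<Rightarrow> elt" where
  "wordfin n ws = foldr (\<lambda>i f. sfin n i \<circ> f) ws id"

definition s_theta :: "nat \<Rightarrow> elt" where
  "s_theta n = wordfin n ([1..<n] @ [n] @ rev [1..<n])"

definition s0 :: "nat \<Rightarrow> elt" where
  "s0 n = s_theta n \<circ> trans (\<lambda>j. - eps 1 j)"

definition saff :: "nat \<Rightarrow> nat \<Rightarrow> elt" where
  "saff n i = (if i = 0 then s0 n else sfin n i)"

definition wordaff :: "nat \<Rightarrow> nat list \<Rightarrow> elt" where
  "wordaff n ws = foldr (\<lambda>i f. saff n i \<circ> f) ws id"

definition Wfin :: "nat \<Rightarrow> elt set" where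
  "Wfin n = {wordfin n ws | ws. set ws \<subseteq> {1..n}}"

definition WP :: "nat \<Rightarrow> elt set" where
  "WP n = {wordfin n ws | ws. set ws \<subseteq> {1..n-1}}"

inductive_set coroot_lattice :: "nat \<Rightarrow> vec set" for n where
  zero: "(\<lambda>_. 0) \<in> coroot_lattice n"
| simple: "\<lbrakk>1 \<le> i; i < n; \<xi> \<in> coroot_lattice n\<rbrakk> \<Longrightarrow>
      (\<lambda>j. \<xi> j + c * (eps i j - eps (i+1) j)) \<in> coroot_lattice n"
| long: "\<xi> \<in> coroot_lattice n \<Longrightarrow> (\<lambda>j. \<xi> j + c * eps n j) \<in> coroot_lattice n"

definition lenW :: "nat \<Rightarrow> elt \<Rightarrow> nat" where
  "lenW n w = (LEAST k. \<exists>ws. length ws = k \<and> set ws \<subseteq> {1..n} \<and> wordfin n ws = w)"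

definition is_min_length_rep :: "nat \<Rightarrow> elt \<Rightarrow> elt set \<Rightarrow> bool" where
  "is_min_length_rep n w A \<longleftrightarrow>
     w \<in> A \<and> (\<forall>y\<in>A. lenW n w \<le> lenW n y \<and> (lenW n y = lenW n w \<longrightarrow> y = w))"

definition coset_WP :: "nat \<Rightarrow> elt \<Rightarrow> elt set" where
  "coset_WP n v = (\<lambda>p. v \<circ> p) ` WP n"

definition strict_partition :: "nat \<Rightarrow> nat list \<Rightarrow> bool" where
  "strict_partition n lam \<longleftrightarrow> sorted_wrt (>) lam \<and> set lam \<subseteq> {1..n}"

definition rho :: "nat \<Rightarrow> nat \<Rightarrow> elt" where
  "rho n i = wordaff n (rev [0..<i])"

definition x_lam :: "nat \<Rightarrow> nat list \<Rightarrow> elt" where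
  "x_lam n lam = foldr (\<circ>) (map (rho n) (rev lam)) id"

definition v_lam :: "nat \<Rightarrow> nat list \<Rightarrow> elt" where
  "v_lam n lam = (THE v. v \<in> Wfin n \<and>
      (\<exists>\<xi>\<in>coroot_lattice n. x_lam n lam = v \<circ> trans (\<lambda>j. - \<xi> j)))"

definition u_k :: "nat \<Rightarrow> nat \<Rightarrow> elt" where
  "u_k n k = wordfin n [n + 1 - k..<n + 1]"

definition u_lam :: "nat \<Rightarrow> nat list \<Rightarrow> elt" where
  "u_lam n lam = foldr (\<circ>) (map (u_k n) (rev lam)) id"

definition dual_lam :: "nat \<Rightarrow> nat list \<Rightarrow> nat list" where
  "dual_lam n lam = map (\<lambda>k. n + 1 - k) (rev lam)"

end

theory Submission
  imports Defs "HOL-Library.Function_Algebras"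
begin

(*
  W acts on Z^n by signed permutations, and the length of w in W is the number of positive
  coroots eps_i - eps_j, eps_i + eps_j (i < j) and eps_i that w sends to lexicographically
  negative vectors.  W_P is the stabiliser of (1, ..., 1), so the coset v(lambda) W_P consists
  of the w that send (1, ..., 1) to the sign vector which is -1 exactly at the parts of lambda;
  both v(lambda) and u_lambda* have this property.  For such w, w^-1 sends eps_k (k a part) to
  some -eps_j, so for every b > k one of w^-1 (eps_k + eps_b), w^-1 (eps_k - eps_b) is
  negative; hence the length of w is at least |lambda| + sum (n - lambda_i), which is the
  length of the word defining u_lambda*.  The minimal element of a coset is unique because
  the length is additive on w W_P as soon as w has no descent in W_P.
*)

section \<open>The finite Weyl group acting on coweights\<close>

definition adj_swap :: "nat \<Rightarrow> nat \<Rightarrow> nat" where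
  "adj_swap i j = (if j = i then i + 1 else if j = i + 1 then i else j)"

lemma adj_swap_adj_swap [simp]: "adj_swap i (adj_swap i j) = j"
  by (simp add: adj_swap_def)

lemma sfin_apply_less: "i \<noteq> n \<Longrightarrow> sfin n i x = (\<lambda>j. x (adj_swap i j))"
  by (simp add: sfin_def adj_swap_def)

lemma sfin_apply_last: "sfin n n x = x(n := - x n)"
  by (simp add: sfin_def)

lemma sfin_sfin [simp]: "sfin n i (sfin n i x) = x"
  by (cases "i = n") (auto simp: sfin_def fun_eq_iff)

lemma sfin_comp_sfin [simp]: "sfin n i \<circ> sfin n i = id"
  by (simp add: fun_eq_iff)

lemma sfin_add: "sfin n i (x + y) = sfin n i x + sfin n i y"
  by (cases "i = n") (auto simp: sfin_def fun_eq_iff)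

lemma sfin_uminus: "sfin n i (- x) = - sfin n i x"
  by (cases "i = n") (auto simp: sfin_def fun_eq_iff)

lemma sfin_diff: "sfin n i (x - y) = sfin n i x - sfin n i y"
  by (metis diff_conv_add_uminus sfin_add sfin_uminus)

lemma sfin_outside: "\<lbrakk>1 \<le> i; i \<le> n; k \<notin> {1..n}\<rbrakk> \<Longrightarrow> sfin n i x k = x k"
  by (cases "i = n") (auto simp: sfin_def)

lemma wordfin_Nil [simp]: "wordfin n [] = id"
  by (simp add: wordfin_def)

lemma wordfin_Cons [simp]: "wordfin n (i # ws) = sfin n i \<circ> wordfin n ws"
  by (simp add: wordfin_def)

lemma wordfin_append: "wordfin n (xs @ ys) = wordfin n xs \<circ> wordfin n ys"
  by (induction xs) auto

lemma wordfin_snoc: "wordfin n (xs @ [i]) = wordfin n xs \<circ> sfin n i"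
  by (simp add: wordfin_append)

lemma wordfin_add: "wordfin n ws (x + y) = wordfin n ws x + wordfin n ws y"
  by (induction ws) (simp_all only: wordfin_Cons wordfin_Nil comp_apply id_apply sfin_add)

lemma wordfin_uminus: "wordfin n ws (- x) = - wordfin n ws x"
  by (induction ws) (simp_all only: wordfin_Cons wordfin_Nil comp_apply id_apply sfin_uminus)

lemma wordfin_diff: "wordfin n ws (x - y) = wordfin n ws x - wordfin n ws y"
  by (metis diff_conv_add_uminus wordfin_add wordfin_uminus)

lemma wordfin_zero: "wordfin n ws 0 = 0"
  by (metis add_cancel_right_right wordfin_add)

lemma wordfin_rev_wordfin [simp]: "wordfin n (rev ws) (wordfin n ws x) = x"
  by (induction ws arbitrary: x) (auto simp: wordfin_append)

lemma wordfin_wordfin_rev [simp]: "wordfin n ws (wordfin n (rev ws) x) = x"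
  by (induction ws arbitrary: x) (auto simp: wordfin_append)

lemma wordfin_inject: "wordfin n ws x = wordfin n ws y \<longleftrightarrow> x = y"
  by (metis wordfin_rev_wordfin)

definition supported_on :: "nat \<Rightarrow> vec \<Rightarrow> bool" where
  "supported_on n x \<longleftrightarrow> (\<forall>j. j \<notin> {1..n} \<longrightarrow> x j = 0)"

lemma wordfin_outside: "\<lbrakk>set ws \<subseteq> {1..n}; k \<notin> {1..n}\<rbrakk> \<Longrightarrow> wordfin n ws x k = x k"
  by (induction ws) (auto simp: sfin_outside)

lemma supported_on_wordfin:
  "\<lbrakk>set ws \<subseteq> {1..n}; supported_on n x\<rbrakk> \<Longrightarrow> supported_on n (wordfin n ws x)"
  by (simp add: supported_on_def wordfin_outside)

section \<open>The lexicographic sign of a coweight\<close>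

definition lex_pos :: "vec \<Rightarrow> bool" where
  "lex_pos y \<longleftrightarrow> (\<exists>k. 0 < y k \<and> (\<forall>i<k. y i = 0))"

definition lex_neg :: "vec \<Rightarrow> bool" where
  "lex_neg y \<longleftrightarrow> lex_pos (- y)"

lemma lex_pos_iff_first:
  assumes "y k \<noteq> 0" "\<forall>i<k. y i = 0"
  shows "lex_pos y \<longleftrightarrow> 0 < y k"
proof -
  have "k' = k" if "y k' \<noteq> 0" "\<forall>i<k'. y i = 0" for k'
    using that assms by (metis linorder_neqE_nat)
  then show ?thesis
    unfolding lex_pos_def using assms by (metis less_irrefl)
qed

lemma lex_neg_iff_first:
  assumes "y k \<noteq> 0" "\<forall>i<k. y i = 0"
  shows "lex_neg y \<longleftrightarrow> y k < 0"
  unfolding lex_neg_def using lex_pos_iff_first[of "- y" k] assms by auto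

lemma lex_pos_or_neg: "y \<noteq> 0 \<Longrightarrow> lex_pos y \<or> lex_neg y"
proof -
  assume "y \<noteq> 0"
  then have ex: "\<exists>k. y k \<noteq> 0" by (auto simp: fun_eq_iff)
  define m where "m = (LEAST k. y k \<noteq> 0)"
  have "y m \<noteq> 0" unfolding m_def using ex by (rule LeastI_ex)
  moreover have "\<forall>i<m. y i = 0" unfolding m_def using not_less_Least by blast
  ultimately show ?thesis using lex_pos_iff_first lex_neg_iff_first by fastforce
qed

lemma not_lex_pos_and_neg: "\<not> (lex_pos y \<and> lex_neg y)"
proof
  assume "lex_pos y \<and> lex_neg y"
  then obtain k k' where "0 < y k" "\<forall>i<k. y i = 0" "y k' < 0" "\<forall>i<k'. y i = 0"
    unfolding lex_pos_def lex_neg_def by auto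
  then show False by (cases k k' rule: linorder_cases) auto
qed

lemma lex_pos_uminus [simp]: "lex_pos (- y) \<longleftrightarrow> lex_neg y"
  by (simp add: lex_neg_def)

lemma lex_neg_uminus [simp]: "lex_neg (- y) \<longleftrightarrow> lex_pos y"
  by (simp add: lex_neg_def)

lemma not_lex_pos_zero [simp]: "\<not> lex_pos 0"
  by (simp add: lex_pos_def)

lemma not_lex_neg_zero [simp]: "\<not> lex_neg 0"
  by (simp add: lex_neg_def)

lemma not_lex_neg_iff: "\<not> lex_neg y \<longleftrightarrow> y = 0 \<or> lex_pos y"
  using lex_pos_or_neg not_lex_pos_and_neg by (metis not_lex_neg_zero)

lemma lex_pos_add: "\<lbrakk>lex_pos x; lex_pos y\<rbrakk> \<Longrightarrow> lex_pos (x + y)"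
proof -
  assume "lex_pos x" "lex_pos y"
  then obtain k m where k: "0 < x k" "\<forall>i<k. x i = 0" and m: "0 < y m" "\<forall>i<m. y i = 0"
    unfolding lex_pos_def by blast
  show ?thesis
    unfolding lex_pos_def using k m
    by (cases k m rule: linorder_cases) (auto intro!: exI[of _ "min k m"])
qed

lemma lex_neg_add: "\<lbrakk>lex_neg x; lex_neg y\<rbrakk> \<Longrightarrow> lex_neg (x + y)"
  unfolding lex_neg_def by (metis lex_pos_add minus_add_distrib)

lemma lex_neg_add_cases: "lex_neg (x + y) \<Longrightarrow> lex_neg x \<or> lex_neg y"
  using not_lex_neg_iff lex_pos_add not_lex_pos_and_neg by (metis add.right_neutral add.left_neutral)

section \<open>Signed permutations\<close>

definition signed_perm :: "nat \<Rightarrow> elt \<Rightarrow> (nat \<Rightarrow> nat) \<Rightarrow> (nat \<Rightarrow> int) \<Rightarrow> bool" where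
  "signed_perm n w \<tau> d \<longleftrightarrow> bij_betw \<tau> {1..n} {1..n} \<and> (\<forall>j. d j = 1 \<or> d j = -1) \<and>
     (\<forall>x. \<forall>j\<in>{1..n}. w x (\<tau> j) = d j * x j) \<and> (\<forall>x. \<forall>k. k \<notin> {1..n} \<longrightarrow> w x k = x k)"

lemma signed_perm_id: "signed_perm n id id (\<lambda>_. 1)"
  by (simp add: signed_perm_def)

lemma signed_perm_sfin_last_comp:
  assumes "1 \<le> n" "signed_perm n w \<tau> d"
  shows "signed_perm n (sfin n n \<circ> w) \<tau> (\<lambda>j. if \<tau> j = n then - d j else d j)"
  using assms unfolding signed_perm_def by (auto simp: sfin_apply_last)

lemma signed_perm_sfin_less_comp:
  assumes "1 \<le> i" "i < n" "signed_perm n w \<tau> d"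
  shows "signed_perm n (sfin n i \<circ> w) (adj_swap i \<circ> \<tau>) d"
proof -
  have "bij_betw (adj_swap i) {1..n} {1..n}"
    by (rule bij_betw_byWitness[where f' = "adj_swap i"]) (use assms in \<open>auto simp: adj_swap_def\<close>)
  then have "bij_betw (adj_swap i \<circ> \<tau>) {1..n} {1..n}"
    using assms(3) unfolding signed_perm_def by (auto intro: bij_betw_trans)
  moreover have "adj_swap i k = k" if "k \<notin> {1..n}" for k
    using that assms by (auto simp: adj_swap_def)
  ultimately show ?thesis
    using assms unfolding signed_perm_def by (auto simp: sfin_apply_less)
qed

lemma signed_perm_wordfin:
  assumes "set ws \<subseteq> {1..n}"
  shows "\<exists>\<tau> d. signed_perm n (wordfin n ws) \<tau> d \<and> (set ws \<subseteq> {1..n-1} \<longrightarrow> (\<forall>j. d j = 1))"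
  using assms
proof (induction ws)
  case Nil
  show ?case using signed_perm_id[of n] by (simp only: wordfin_Nil) blast
next
  case (Cons i ws)
  then obtain \<tau> d where w: "signed_perm n (wordfin n ws) \<tau> d"
    and d: "set ws \<subseteq> {1..n-1} \<longrightarrow> (\<forall>j. d j = 1)"
    by auto
  have i: "1 \<le> i" "i \<le> n" using Cons.prems by auto
  show ?case
  proof (cases "i = n")
    case True
    then have "\<not> set (i # ws) \<subseteq> {1..n-1}" using i by auto
    moreover have "signed_perm n (wordfin n (i # ws)) \<tau> (\<lambda>j. if \<tau> j = n then - d j else d j)"
      using signed_perm_sfin_last_comp[OF _ w] i True by simp
    ultimately show ?thesis by blast
  next
    case False
    then have "signed_perm n (wordfin n (i # ws)) (adj_swap i \<circ> \<tau>) d"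
      using signed_perm_sfin_less_comp[OF _ _ w] i by simp
    moreover have "set (i # ws) \<subseteq> {1..n-1} \<Longrightarrow> set ws \<subseteq> {1..n-1}" by simp
    ultimately show ?thesis using d by blast
  qed
qed

lemma signed_perm_surj: "\<lbrakk>signed_perm n w \<tau> d; k \<in> {1..n}\<rbrakk> \<Longrightarrow> \<exists>j\<in>{1..n}. \<tau> j = k"
  unfolding signed_perm_def bij_betw_def by (metis imageE)

lemma signed_perm_inj:
  "\<lbrakk>signed_perm n w \<tau> d; j \<in> {1..n}; j' \<in> {1..n}; \<tau> j = \<tau> j'\<rbrakk> \<Longrightarrow> j = j'"
  unfolding signed_perm_def bij_betw_def inj_on_def by blast

lemma signed_perm_range: "\<lbrakk>signed_perm n w \<tau> d; j \<in> {1..n}\<rbrakk> \<Longrightarrow> \<tau> j \<in> {1..n}"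
  unfolding signed_perm_def bij_betw_def by blast

lemma signed_perm_eps:
  assumes w: "signed_perm n w \<tau> d" and j: "j \<in> {1..n}"
  shows "w (eps j) = (\<lambda>k. d j * eps (\<tau> j) k)"
proof
  fix k
  show "w (eps j) k = d j * eps (\<tau> j) k"
  proof (cases "k \<in> {1..n}")
    case True
    then obtain j' where j': "j' \<in> {1..n}" "\<tau> j' = k" using signed_perm_surj[OF w] by blast
    then have "w (eps j) k = d j' * eps j j'" using w unfolding signed_perm_def by auto
    then show ?thesis using signed_perm_inj[OF w j j'(1)] j' by (auto simp: eps_def)
  next
    case False
    then show ?thesis
      using w j signed_perm_range[OF w j] unfolding signed_perm_def by (auto simp: eps_def)
  qed
qed

definition ones :: "nat \<Rightarrow> vec" where
  "ones n = (\<lambda>j. if j \<in> {1..n} then 1 else 0)"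

lemma signed_perm_ones: "\<lbrakk>signed_perm n w \<tau> d; j \<in> {1..n}\<rbrakk> \<Longrightarrow> w (ones n) (\<tau> j) = d j"
  unfolding signed_perm_def ones_def by auto

section \<open>Positive coroots and the inversion number\<close>

definition simple_coroot :: "nat \<Rightarrow> nat \<Rightarrow> vec" where
  "simple_coroot n k = (if k = n then eps n else eps k - eps (k + 1))"

definition pos_coroots :: "nat \<Rightarrow> vec set" where
  "pos_coroots n = {eps i - eps j | i j. 1 \<le> i \<and> i < j \<and> j \<le> n}
     \<union> {eps i + eps j | i j. 1 \<le> i \<and> i < j \<and> j \<le> n} \<union> {eps i | i. 1 \<le> i \<and> i \<le> n}"

lemma eps_diff_in_pos_coroots: "\<lbrakk>1 \<le> i; i < j; j \<le> n\<rbrakk> \<Longrightarrow> eps i - eps j \<in> pos_coroots n"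
  unfolding pos_coroots_def by blast

lemma eps_add_in_pos_coroots:
  assumes "i \<in> {1..n}" "j \<in> {1..n}" "i \<noteq> j"
  shows "eps i + eps j \<in> pos_coroots n"
proof (cases "i < j")
  case True
  then show ?thesis using assms unfolding pos_coroots_def by auto
next
  case False
  then have "eps i + eps j = eps j + eps i" "j < i" using assms by (auto simp: add.commute)
  then show ?thesis using assms unfolding pos_coroots_def by auto
qed

lemma eps_in_pos_coroots: "i \<in> {1..n} \<Longrightarrow> eps i \<in> pos_coroots n"
  unfolding pos_coroots_def by auto

lemma simple_coroot_in_pos_coroots: "k \<in> {1..n} \<Longrightarrow> simple_coroot n k \<in> pos_coroots n"
  by (cases "k = n") (auto simp: simple_coroot_def intro: eps_in_pos_coroots eps_diff_in_pos_coroots)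

lemma finite_pos_coroots: "finite (pos_coroots n)"
proof -
  have "pos_coroots n \<subseteq> (\<lambda>(i, j). eps i - eps j) ` ({1..n} \<times> {1..n})
      \<union> (\<lambda>(i, j). eps i + eps j) ` ({1..n} \<times> {1..n}) \<union> eps ` {1..n}"
    unfolding pos_coroots_def by force
  then show ?thesis by (rule finite_subset) auto
qed

lemma lex_pos_eps: "lex_pos (eps i)"
  using lex_pos_iff_first[of "eps i" i] by (auto simp: eps_def)

lemma lex_pos_eps_diff: "i < j \<Longrightarrow> lex_pos (eps i - eps j)"
  using lex_pos_iff_first[of "eps i - eps j" i] by (auto simp: eps_def)

lemma lex_pos_eps_add: "i < j \<Longrightarrow> lex_pos (eps i + eps j)"
  using lex_pos_iff_first[of "eps i + eps j" i] by (auto simp: eps_def)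

lemma lex_pos_pos_coroot: "\<beta> \<in> pos_coroots n \<Longrightarrow> lex_pos \<beta>"
  unfolding pos_coroots_def using lex_pos_eps_diff lex_pos_eps_add lex_pos_eps by auto

lemma simple_coroot_nonzero: "k \<in> {1..n} \<Longrightarrow> simple_coroot n k \<noteq> 0"
  using lex_pos_pos_coroot[OF simple_coroot_in_pos_coroots] not_lex_pos_zero by metis

lemma wordfin_simple_coroot_nonzero: "k \<in> {1..n} \<Longrightarrow> wordfin n ws (simple_coroot n k) \<noteq> 0"
  using simple_coroot_nonzero wordfin_inject wordfin_zero by metis

lemma adj_swap_in_range: "\<lbrakk>1 \<le> i; i < n; j \<in> {1..n}\<rbrakk> \<Longrightarrow> adj_swap i j \<in> {1..n}"
  by (auto simp: adj_swap_def)

lemma sfin_eps_less: "i \<noteq> n \<Longrightarrow> sfin n i (eps a) = eps (adj_swap i a)"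
  by (auto simp: sfin_apply_less eps_def fun_eq_iff adj_swap_def)

lemma sfin_last_eps: "sfin n n (eps a) = (if a = n then - eps n else eps a)"
  by (auto simp: sfin_apply_last eps_def fun_eq_iff)

lemma sfin_simple_coroot: "k \<in> {1..n} \<Longrightarrow> sfin n k (simple_coroot n k) = - simple_coroot n k"
  by (cases "k = n") (auto simp: simple_coroot_def sfin_last_eps sfin_eps_less sfin_diff adj_swap_def)

lemma pos_coroots_cases [consumes 1, case_names diff add single]:
  assumes "\<beta> \<in> pos_coroots n"
  obtains (diff) i j where "1 \<le> i" "i < j" "j \<le> n" "\<beta> = eps i - eps j"
    | (add) i j where "1 \<le> i" "i < j" "j \<le> n" "\<beta> = eps i + eps j"
    | (single) i where "1 \<le> i" "i \<le> n" "\<beta> = eps i"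
  using assms unfolding pos_coroots_def by blast

lemma sfin_last_pos_coroot:
  assumes "\<beta> \<in> pos_coroots n" "\<beta> \<noteq> eps n"
  shows "sfin n n \<beta> \<in> pos_coroots n"
  using assms
proof (cases rule: pos_coroots_cases)
  case (diff i j)
  then show ?thesis
    by (cases "j = n") (auto simp: sfin_diff sfin_last_eps intro: eps_add_in_pos_coroots eps_diff_in_pos_coroots)
next
  case (add i j)
  then show ?thesis
    by (cases "j = n") (auto simp: sfin_add sfin_last_eps intro: eps_add_in_pos_coroots eps_diff_in_pos_coroots)
next
  case (single i)
  then show ?thesis using assms(2) by (auto simp: sfin_last_eps intro: eps_in_pos_coroots)
qed

lemma sfin_less_pos_coroot:
  assumes k: "1 \<le> k" "k < n" and \<beta>: "\<beta> \<in> pos_coroots n" "\<beta> \<noteq> eps k - eps (k + 1)"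
  shows "sfin n k \<beta> \<in> pos_coroots n"
proof -
  let ?\<sigma> = "adj_swap k"
  have range: "j \<in> {1..n} \<Longrightarrow> ?\<sigma> j \<in> {1..n}" for j using adj_swap_in_range[OF k] .
  from \<beta>(1) show ?thesis
  proof (cases rule: pos_coroots_cases)
    case (diff i j)
    then have "\<not> (i = k \<and> j = k + 1)" using \<beta>(2) by auto
    then have "?\<sigma> i < ?\<sigma> j" using diff by (auto simp: adj_swap_def)
    then show ?thesis
      using diff k range[of i] range[of j]
      by (auto simp: sfin_diff sfin_eps_less intro: eps_diff_in_pos_coroots)
  next
    case (add i j)
    then have "?\<sigma> i \<noteq> ?\<sigma> j" by (metis adj_swap_adj_swap less_irrefl)
    then show ?thesis
      using add k range[of i] range[of j]
      by (auto simp: sfin_add sfin_eps_less intro: eps_add_in_pos_coroots)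
  next
    case (single i)
    then show ?thesis using k range[of i] by (auto simp: sfin_eps_less intro: eps_in_pos_coroots)
  qed
qed

lemma sfin_pos_coroot:
  assumes "k \<in> {1..n}" "\<beta> \<in> pos_coroots n" "\<beta> \<noteq> simple_coroot n k"
  shows "sfin n k \<beta> \<in> pos_coroots n"
  using assms sfin_last_pos_coroot sfin_less_pos_coroot
  by (cases "k = n") (auto simp: simple_coroot_def)

definition n_inversions :: "nat \<Rightarrow> elt \<Rightarrow> nat" where
  "n_inversions n w = card {\<beta> \<in> pos_coroots n. lex_neg (w \<beta>)}"

lemma n_inversions_id: "n_inversions n id = 0"
proof -
  have "{\<beta> \<in> pos_coroots n. lex_neg (id \<beta>)} = {}"
    using lex_pos_pos_coroot not_lex_pos_and_neg by auto
  then show ?thesis unfolding n_inversions_def by (simp only: card.empty)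
qed

lemma n_inversions_pos:
  "\<lbrakk>k \<in> {1..n}; lex_neg (w (simple_coroot n k))\<rbrakk> \<Longrightarrow> 0 < n_inversions n w"
  unfolding n_inversions_def using simple_coroot_in_pos_coroots finite_pos_coroots
  by (subst card_gt_0_iff) auto

lemma sfin_pos_coroots_minus_simple:
  assumes k: "k \<in> {1..n}" and \<beta>: "\<beta> \<in> pos_coroots n - {simple_coroot n k}"
  shows "sfin n k \<beta> \<in> pos_coroots n - {simple_coroot n k}"
proof -
  let ?a = "simple_coroot n k"
  have "sfin n k \<beta> \<noteq> ?a"
  proof
    assume "sfin n k \<beta> = ?a"
    then have "\<beta> = - ?a" using sfin_simple_coroot[OF k] by (metis sfin_sfin)
    then show False
      using \<beta> lex_pos_pos_coroot[of \<beta>] lex_pos_pos_coroot[OF simple_coroot_in_pos_coroots[OF k]]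
        not_lex_pos_and_neg
      by auto
  qed
  then show ?thesis using sfin_pos_coroot[OF k] \<beta> by auto
qed

lemma n_inversions_comp_sfin:
  assumes k: "k \<in> {1..n}" and odd: "\<And>x. w (- x) = - w x"
    and nz: "w (simple_coroot n k) \<noteq> 0"
  shows "n_inversions n (w \<circ> sfin n k) =
    (if lex_neg (w (simple_coroot n k)) then n_inversions n w - 1 else n_inversions n w + 1)"
proof -
  let ?a = "simple_coroot n k" and ?s = "sfin n k"
  let ?X = "pos_coroots n - {?a}"
  have a: "?a \<in> pos_coroots n" using simple_coroot_in_pos_coroots[OF k] .
  note s_perm = sfin_pos_coroots_minus_simple[OF k]
  have "{\<beta> \<in> ?X. lex_neg (w (?s \<beta>))} = ?s ` {\<beta> \<in> ?X. lex_neg (w \<beta>)}"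
  proof (intro equalityI subsetI)
    fix \<beta> assume "\<beta> \<in> {\<beta> \<in> ?X. lex_neg (w (?s \<beta>))}"
    then have "?s \<beta> \<in> {\<beta> \<in> ?X. lex_neg (w \<beta>)}" using s_perm by blast
    then show "\<beta> \<in> ?s ` {\<beta> \<in> ?X. lex_neg (w \<beta>)}"
      by (intro image_eqI[where x = "?s \<beta>"]) simp_all
  next
    fix \<beta> assume "\<beta> \<in> ?s ` {\<beta> \<in> ?X. lex_neg (w \<beta>)}"
    then obtain \<gamma> where "\<gamma> \<in> ?X" "lex_neg (w \<gamma>)" "\<beta> = ?s \<gamma>" by blast
    then show "\<beta> \<in> {\<beta> \<in> ?X. lex_neg (w (?s \<beta>))}" using s_perm by simp
  qed
  moreover have "inj_on ?s A" for A by (rule inj_onI) (metis sfin_sfin)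
  ultimately have X: "card {\<beta> \<in> ?X. lex_neg (w (?s \<beta>))} = card {\<beta> \<in> ?X. lex_neg (w \<beta>)}"
    by (simp add: card_image)
  have split: "card {\<beta> \<in> pos_coroots n. P \<beta>} = card {\<beta> \<in> ?X. P \<beta>} + (if P ?a then 1 else 0)"
    for P
  proof -
    have "{\<beta> \<in> pos_coroots n. P \<beta>} = (if P ?a then insert ?a else id) {\<beta> \<in> ?X. P \<beta>}"
      using a by auto
    then show ?thesis using finite_pos_coroots by simp
  qed
  have "w (?s ?a) = - w ?a" using sfin_simple_coroot[OF k] odd by simp
  then have "lex_neg (w (?s ?a)) \<longleftrightarrow> \<not> lex_neg (w ?a)"
    using lex_pos_or_neg[OF nz] not_lex_pos_and_neg by auto
  then show ?thesis
    unfolding n_inversions_def comp_apply X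
      split[of "\<lambda>\<beta>. lex_neg (w (?s \<beta>))"] split[of "\<lambda>\<beta>. lex_neg (w \<beta>)"]
    by simp
qed

lemma n_inversions_wordfin_snoc:
  assumes "k \<in> {1..n}"
  shows "n_inversions n (wordfin n (ws @ [k])) =
    (if lex_neg (wordfin n ws (simple_coroot n k)) then n_inversions n (wordfin n ws) - 1
     else n_inversions n (wordfin n ws) + 1)"
  unfolding wordfin_snoc
  by (rule n_inversions_comp_sfin[OF assms wordfin_uminus wordfin_simple_coroot_nonzero[OF assms]])

lemma n_inversions_le_length: "set ws \<subseteq> {1..n} \<Longrightarrow> n_inversions n (wordfin n ws) \<le> length ws"
proof (induction ws rule: rev_induct)
  case Nil
  show ?case using n_inversions_id[of n] by (simp add: id_def)
next
  case (snoc k ws)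
  then show ?case by (auto simp: n_inversions_wordfin_snoc)
qed

section \<open>The length as the number of inversions\<close>

lemma lex_pos_smult_eps: "c \<noteq> 0 \<Longrightarrow> lex_pos (\<lambda>k. c * eps a k) \<longleftrightarrow> 0 < c"
  using lex_pos_iff_first[of "\<lambda>k. c * eps a k" a] by (auto simp: eps_def)

lemma lex_pos_smult_eps_diff:
  assumes "a \<noteq> b" "c = 1 \<or> c = -1" "lex_pos ((\<lambda>k. c * eps a k) - eps b)"
  shows "c = 1 \<and> a < b"
proof (cases "a < b")
  case True
  then have "lex_pos ((\<lambda>k. c * eps a k) - eps b) \<longleftrightarrow> 0 < c"
    using lex_pos_iff_first[of "(\<lambda>k. c * eps a k) - eps b" a] assms(2) by (auto simp: eps_def)
  then show ?thesis using assms True by auto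
next
  case False
  then have "lex_neg ((\<lambda>k. c * eps a k) - eps b)"
    using assms(1) lex_neg_iff_first[of "(\<lambda>k. c * eps a k) - eps b" b] by (auto simp: eps_def)
  then show ?thesis using assms(3) not_lex_pos_and_neg by blast
qed

lemma signed_perm_increasing:
  assumes w: "signed_perm n w \<tau> d" and diff: "\<And>x y. w (x - y) = w x - w y"
    and pos: "\<forall>k\<in>{1..n}. lex_pos (w (simple_coroot n k))"
    and j: "1 \<le> j" "j \<le> n"
  shows "d j = 1 \<and> (j < n \<longrightarrow> \<tau> j < \<tau> (j + 1))"
  using j(2)
proof (induction j rule: inc_induct)
  case base
  have d: "d n = 1 \<or> d n = -1" using w unfolding signed_perm_def by blast
  have "lex_pos (w (eps n))" using bspec[OF pos, of n] j by (simp add: simple_coroot_def)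
  then show ?case using signed_perm_eps[OF w, of n] j d lex_pos_smult_eps[of "d n" "\<tau> n"] by auto
next
  case (step m)
  have m: "m \<in> {1..n}" "Suc m \<in> {1..n}" using j step by auto
  have "w (eps (m + 1)) = eps (\<tau> (m + 1))" using signed_perm_eps[OF w m(2)] step by simp
  then have "w (eps m - eps (m + 1)) = (\<lambda>k. d m * eps (\<tau> m) k) - eps (\<tau> (m + 1))"
    by (simp only: diff signed_perm_eps[OF w m(1)])
  moreover have "lex_pos (w (eps m - eps (m + 1)))"
    using bspec[OF pos m(1)] step by (simp add: simple_coroot_def)
  ultimately have "lex_pos ((\<lambda>k. d m * eps (\<tau> m) k) - eps (\<tau> (m + 1)))" by simp
  moreover have "\<tau> m \<noteq> \<tau> (m + 1)" using signed_perm_inj[OF w, of m "m + 1"] m by auto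
  moreover have "d m = 1 \<or> d m = -1" using w unfolding signed_perm_def by blast
  ultimately have "d m = 1 \<and> \<tau> m < \<tau> (m + 1)" using lex_pos_smult_eps_diff by blast
  then show ?case by auto
qed

lemma increasing_bij_betw_interval_eq_id:
  fixes \<tau> :: "nat \<Rightarrow> nat"
  assumes bij: "bij_betw \<tau> {1..n} {1..n}" and incr: "\<And>j. \<lbrakk>1 \<le> j; j < n\<rbrakk> \<Longrightarrow> \<tau> j < \<tau> (j + 1)"
    and j: "j \<in> {1..n}"
  shows "\<tau> j = j"
proof -
  have range: "\<tau> i \<in> {1..n}" if "i \<in> {1..n}" for i using bij that by (auto dest: bij_betwE)
  have "i \<le> \<tau> i" if "1 \<le> i" "i \<le> n" for i
    using that
  proof (induction i rule: dec_induct)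
    case base
    then show ?case using range[of 1] by auto
  next
    case (step m)
    then show ?case using incr[of m] by auto
  qed
  moreover have "\<tau> i \<le> i" if "1 \<le> i" "i \<le> n" for i
    using that(2)
  proof (induction i rule: inc_induct)
    case base
    then show ?case using range[of n] that by auto
  next
    case (step m)
    then show ?case using incr[of m] that by auto
  qed
  ultimately show ?thesis using j by (simp add: antisym)
qed

lemma signed_perm_eq_id:
  assumes w: "signed_perm n w \<tau> d" and diff: "\<And>x y. w (x - y) = w x - w y"
    and pos: "\<forall>k\<in>{1..n}. lex_pos (w (simple_coroot n k))"
  shows "w = id"
proof (intro ext)
  fix x k
  show "w x k = id x k"
  proof (cases "k \<in> {1..n}")
    case True
    have "bij_betw \<tau> {1..n} {1..n}" using w unfolding signed_perm_def by blast
    then have "\<tau> k = k"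
      by (rule increasing_bij_betw_interval_eq_id[OF _ _ True])
        (use signed_perm_increasing[OF w diff pos] in auto)
    moreover have "d k = 1" using signed_perm_increasing[OF w diff pos] True by auto
    ultimately show ?thesis using w True unfolding signed_perm_def by (metis id_apply mult_1)
  next
    case False
    then show ?thesis using w unfolding signed_perm_def by simp
  qed
qed

lemma wordfin_eq_id_of_no_descent:
  assumes "set ws \<subseteq> {1..n}" "\<forall>k\<in>{1..n}. \<not> lex_neg (wordfin n ws (simple_coroot n k))"
  shows "wordfin n ws = id"
proof -
  obtain \<tau> d where "signed_perm n (wordfin n ws) \<tau> d"
    using signed_perm_wordfin[OF assms(1)] by blast
  moreover have "\<forall>k\<in>{1..n}. lex_pos (wordfin n ws (simple_coroot n k))"
    using assms(2) wordfin_simple_coroot_nonzero lex_pos_or_neg by blast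
  ultimately show ?thesis using signed_perm_eq_id wordfin_diff by blast
qed

lemma n_inversions_wordfin_eq_0_iff:
  assumes "set ws \<subseteq> {1..n}"
  shows "n_inversions n (wordfin n ws) = 0 \<longleftrightarrow> wordfin n ws = id"
proof
  assume "n_inversions n (wordfin n ws) = 0"
  then have "\<forall>k\<in>{1..n}. \<not> lex_neg (wordfin n ws (simple_coroot n k))"
    using n_inversions_pos by fastforce
  then show "wordfin n ws = id" by (rule wordfin_eq_id_of_no_descent[OF assms])
next
  assume "wordfin n ws = id"
  then show "n_inversions n (wordfin n ws) = 0" by (simp only: n_inversions_id)
qed

lemma wordfin_descent:
  assumes "set ws \<subseteq> {1..n}" "0 < n_inversions n (wordfin n ws)"
  shows "\<exists>k\<in>{1..n}. lex_neg (wordfin n ws (simple_coroot n k))"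
  using wordfin_eq_id_of_no_descent[OF assms(1)] n_inversions_wordfin_eq_0_iff[OF assms(1)] assms(2)
  by auto

lemma reduced_word_exists:
  assumes "set ws \<subseteq> {1..n}"
  shows "\<exists>ws'. set ws' \<subseteq> {1..n} \<and> length ws' = n_inversions n (wordfin n ws) \<and>
    wordfin n ws' = wordfin n ws"
  using assms
proof (induction "n_inversions n (wordfin n ws)" arbitrary: ws)
  case 0
  then have "wordfin n [] = wordfin n ws" using n_inversions_wordfin_eq_0_iff by simp
  then show ?case using 0 by (intro exI[of _ "[]"]) simp
next
  case (Suc m)
  then have "0 < n_inversions n (wordfin n ws)" by simp
  then obtain k where k: "k \<in> {1..n}" "lex_neg (wordfin n ws (simple_coroot n k))"
    using wordfin_descent[OF Suc.prems] by blast
  then have "m = n_inversions n (wordfin n (ws @ [k]))"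
    using Suc.hyps(2) n_inversions_wordfin_snoc[OF k(1)] by simp
  moreover have "set (ws @ [k]) \<subseteq> {1..n}" using Suc.prems k(1) by simp
  ultimately obtain ws' where ws': "set ws' \<subseteq> {1..n}" "length ws' = m"
    "wordfin n ws' = wordfin n (ws @ [k])"
    using Suc.hyps(1) by blast
  then have "wordfin n (ws' @ [k]) = wordfin n ws"
    by (simp add: wordfin_snoc comp_assoc)
  then show ?case using ws' k(1) Suc.hyps(2) by (intro exI[of _ "ws' @ [k]"]) simp
qed

lemma lenW_wordfin:
  assumes "set ws \<subseteq> {1..n}"
  shows "lenW n (wordfin n ws) = n_inversions n (wordfin n ws)"
  unfolding lenW_def
proof (rule Least_equality)
  show "\<exists>ws'. length ws' = n_inversions n (wordfin n ws) \<and> set ws' \<subseteq> {1..n} \<and>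
      wordfin n ws' = wordfin n ws"
    using reduced_word_exists[OF assms] by blast
next
  fix l assume "\<exists>ws'. length ws' = l \<and> set ws' \<subseteq> {1..n} \<and> wordfin n ws' = wordfin n ws"
  then show "n_inversions n (wordfin n ws) \<le> l" using n_inversions_le_length by metis
qed

lemma n_inversions_wordfin_rev_le:
  assumes "set ws \<subseteq> {1..n}"
  shows "n_inversions n (wordfin n (rev ws)) \<le> n_inversions n (wordfin n ws)"
proof -
  obtain ws' where ws': "set ws' \<subseteq> {1..n}" "length ws' = n_inversions n (wordfin n ws)"
    "wordfin n ws' = wordfin n ws"
    using reduced_word_exists[OF assms] by blast
  have "wordfin n (rev ws') x = wordfin n (rev ws) x" for x
  proof -
    have "wordfin n (rev ws') x = wordfin n (rev ws') (wordfin n ws' (wordfin n (rev ws) x))"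
      by (simp only: ws'(3) wordfin_wordfin_rev)
    then show ?thesis by simp
  qed
  then have "wordfin n (rev ws') = wordfin n (rev ws)" ..
  then show ?thesis using n_inversions_le_length[of "rev ws'" n] ws' by auto
qed

lemma n_inversions_wordfin_rev:
  "set ws \<subseteq> {1..n} \<Longrightarrow> n_inversions n (wordfin n (rev ws)) = n_inversions n (wordfin n ws)"
  using n_inversions_wordfin_rev_le[of ws n] n_inversions_wordfin_rev_le[of "rev ws" n] by auto

section \<open>The parabolic subgroup \<open>W\<^sub>P\<close> and its cosets\<close>

lemma mem_Wfin_iff: "w \<in> Wfin n \<longleftrightarrow> (\<exists>ws. set ws \<subseteq> {1..n} \<and> w = wordfin n ws)"
  unfolding Wfin_def by auto

lemma mem_WP_iff: "p \<in> WP n \<longleftrightarrow> (\<exists>ps. set ps \<subseteq> {1..n-1} \<and> p = wordfin n ps)"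
  unfolding WP_def by auto

lemma wordfin_in_Wfin: "set ws \<subseteq> {1..n} \<Longrightarrow> wordfin n ws \<in> Wfin n"
  unfolding mem_Wfin_iff by blast

lemma wordfin_in_WP: "set ps \<subseteq> {1..n-1} \<Longrightarrow> wordfin n ps \<in> WP n"
  unfolding mem_WP_iff by blast

lemma sfin_ones: "\<lbrakk>1 \<le> i; i < n\<rbrakk> \<Longrightarrow> sfin n i (ones n) = ones n"
  by (auto simp: sfin_apply_less ones_def adj_swap_def fun_eq_iff)

lemma wordfin_ones: "set ws \<subseteq> {1..n-1} \<Longrightarrow> wordfin n ws (ones n) = ones n"
  by (induction ws) (auto simp: sfin_ones)

lemma signed_perm_fixing_ones:
  "\<lbrakk>signed_perm n w \<tau> d; w (ones n) = ones n; j \<in> {1..n}\<rbrakk> \<Longrightarrow> d j = 1"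
  using signed_perm_ones[of n w \<tau> d j] signed_perm_range[of n w \<tau> d j] by (auto simp: ones_def)

lemma wordfin_in_WP_of_fixes_ones:
  assumes "set ws \<subseteq> {1..n}" "wordfin n ws (ones n) = ones n"
  shows "wordfin n ws \<in> WP n"
  using assms
proof (induction "n_inversions n (wordfin n ws)" arbitrary: ws)
  case 0
  then have "wordfin n ws = wordfin n []" using n_inversions_wordfin_eq_0_iff by simp
  then show ?case using wordfin_in_WP[of "[]" n] by (metis empty_set empty_subsetI)
next
  case (Suc m)
  then have "0 < n_inversions n (wordfin n ws)" by simp
  then obtain k where k: "k \<in> {1..n}" "lex_neg (wordfin n ws (simple_coroot n k))"
    using wordfin_descent[OF Suc.prems(1)] by blast
  obtain \<tau> d where w: "signed_perm n (wordfin n ws) \<tau> d"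
    using signed_perm_wordfin[OF Suc.prems(1)] by blast
  have "k \<noteq> n"
  proof
    assume "k = n"
    then have "wordfin n ws (simple_coroot n k) = eps (\<tau> n)"
      using signed_perm_eps[OF w] signed_perm_fixing_ones[OF w Suc.prems(2)] k(1)
      by (simp add: simple_coroot_def)
    then show False using k(2) lex_pos_eps not_lex_pos_and_neg by metis
  qed
  then have "m = n_inversions n (wordfin n (ws @ [k]))"
    using Suc.hyps(2) n_inversions_wordfin_snoc[OF k(1)] k(2) by simp
  moreover have "wordfin n (ws @ [k]) (ones n) = ones n"
    using Suc.prems(2) sfin_ones[of k n] k(1) \<open>k \<noteq> n\<close> by (simp add: wordfin_snoc)
  ultimately have "wordfin n (ws @ [k]) \<in> WP n"
    using Suc.hyps(1) Suc.prems(1) k(1) by simp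
  then obtain ps where ps: "set ps \<subseteq> {1..n-1}" "wordfin n ps = wordfin n (ws @ [k])"
    unfolding mem_WP_iff by metis
  then have "wordfin n (ps @ [k]) = wordfin n ws"
    by (simp add: wordfin_snoc comp_assoc)
  moreover have "set (ps @ [k]) \<subseteq> {1..n-1}" using ps(1) k(1) \<open>k \<noteq> n\<close> by auto
  ultimately show ?case using wordfin_in_WP by metis
qed

lemma coset_WP_eq:
  assumes vs: "set vs \<subseteq> {1..n}"
  shows "coset_WP n (wordfin n vs) = {w \<in> Wfin n. w (ones n) = wordfin n vs (ones n)}"
proof (intro equalityI subsetI)
  fix w assume "w \<in> coset_WP n (wordfin n vs)"
  then obtain p where "p \<in> WP n" "w = wordfin n vs \<circ> p"
    unfolding coset_WP_def by blast
  then obtain ps where ps: "set ps \<subseteq> {1..n-1}" "w = wordfin n (vs @ ps)"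
    unfolding mem_WP_iff by (auto simp: wordfin_append)
  have "set ps \<subseteq> {1..n}" using ps(1) by (rule order_trans) auto
  then have "w \<in> Wfin n" using vs ps(2) wordfin_in_Wfin[of "vs @ ps" n] by simp
  then show "w \<in> {w \<in> Wfin n. w (ones n) = wordfin n vs (ones n)}"
    using ps wordfin_ones[OF ps(1)] by (simp add: wordfin_append)
next
  fix w assume "w \<in> {w \<in> Wfin n. w (ones n) = wordfin n vs (ones n)}"
  then obtain ws where ws: "set ws \<subseteq> {1..n}" "w = wordfin n ws"
    and ones: "wordfin n ws (ones n) = wordfin n vs (ones n)"
    unfolding mem_Wfin_iff by auto
  have "set (rev vs @ ws) \<subseteq> {1..n}" using vs ws(1) by auto
  moreover have "wordfin n (rev vs @ ws) (ones n) = ones n"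
    using ones by (simp add: wordfin_append)
  ultimately have "wordfin n (rev vs @ ws) \<in> WP n" by (rule wordfin_in_WP_of_fixes_ones)
  moreover have "w = wordfin n vs \<circ> wordfin n (rev vs @ ws)"
    using ws(2) by (simp add: wordfin_append fun_eq_iff)
  ultimately show "w \<in> coset_WP n (wordfin n vs)" unfolding coset_WP_def by blast
qed

lemma lex_neg_eps_diff_iff:
  assumes "a \<noteq> b"
  shows "lex_neg (eps a - eps b) \<longleftrightarrow> b < a"
proof (cases "a < b")
  case True
  then show ?thesis using lex_pos_eps_diff not_lex_pos_and_neg by fastforce
next
  case False
  then have "b < a" using assms by simp
  then show ?thesis using lex_pos_eps_diff[of b a] by (simp add: lex_neg_def)
qed

lemma lex_pos_wordfin_eps_diff:
  assumes asc: "\<forall>k. 1 \<le> k \<and> k < n \<longrightarrow> \<not> lex_neg (wordfin n ys (simple_coroot n k))"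
    and ab: "1 \<le> a" "a < b" "b \<le> n"
  shows "lex_pos (wordfin n ys (eps a - eps b))"
proof -
  have simple: "lex_pos (wordfin n ys (simple_coroot n k))" if "1 \<le> k" "k < n" for k
    using asc wordfin_simple_coroot_nonzero[of k n ys] lex_pos_or_neg that by auto
  have "lex_pos (wordfin n ys (eps a - eps c))" if "Suc a \<le> c" "c \<le> n" for c
    using that
  proof (induction c rule: dec_induct)
    case base
    then have "a < n" by simp
    have e: "simple_coroot n a = eps a - eps (Suc a)" using base by (simp add: simple_coroot_def)
    show ?case using simple[OF ab(1) \<open>a < n\<close>] unfolding e .
  next
    case (step m)
    have e: "simple_coroot n m = eps m - eps (Suc m)" using step by (simp add: simple_coroot_def)
    have "eps a - eps (Suc m) = (eps a - eps m) + simple_coroot n m"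
      unfolding e by (simp add: fun_eq_iff)
    then have "wordfin n ys (eps a - eps (Suc m))
        = wordfin n ys (eps a - eps m) + wordfin n ys (simple_coroot n m)"
      by (simp only: wordfin_add)
    moreover have "lex_pos (wordfin n ys (eps a - eps m))"
      using step.IH[OF Suc_leD[OF step.prems]] .
    moreover have "lex_pos (wordfin n ys (simple_coroot n m))" using simple step ab(1) by simp
    ultimately show ?case using lex_pos_add by metis
  qed
  then show ?thesis using ab by simp
qed


lemma lex_neg_wordfin_eps_diff_iff:
  assumes asc: "\<forall>k. 1 \<le> k \<and> k < n \<longrightarrow> \<not> lex_neg (wordfin n ys (simple_coroot n k))"
    and ab: "a \<in> {1..n}" "b \<in> {1..n}" "a \<noteq> b"
  shows "lex_neg (wordfin n ys (eps a - eps b)) \<longleftrightarrow> b < a"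
proof (cases "a < b")
  case True
  then show ?thesis
    using lex_pos_wordfin_eps_diff[OF asc] ab not_lex_pos_and_neg by fastforce
next
  case False
  then have "b < a" using ab by simp
  then have "lex_pos (wordfin n ys (eps b - eps a))"
    using lex_pos_wordfin_eps_diff[OF asc] ab by simp
  moreover have "wordfin n ys (eps a - eps b) = - wordfin n ys (eps b - eps a)"
    by (simp only: wordfin_uminus[symmetric] minus_diff_eq)
  ultimately show ?thesis using \<open>b < a\<close> by simp
qed

lemma n_inversions_comp_WP:
  assumes asc: "\<forall>k. 1 \<le> k \<and> k < n \<longrightarrow> \<not> lex_neg (wordfin n ys (simple_coroot n k))"
    and ps: "set ps \<subseteq> {1..n-1}"
  shows "n_inversions n (wordfin n ys \<circ> wordfin n ps)
    = n_inversions n (wordfin n ys) + n_inversions n (wordfin n ps)"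
  using ps
proof (induction ps rule: rev_induct)
  case Nil
  show ?case by (simp only: wordfin_Nil comp_id n_inversions_id add_0_right)
next
  case (snoc k ps)
  let ?y = "wordfin n ys" and ?p = "wordfin n ps" and ?a = "simple_coroot n k"
  have k: "1 \<le> k" "k < n" and ps: "set ps \<subseteq> {1..n-1}" using snoc.prems by auto
  have "set ps \<subseteq> {1..n}" using ps by (rule order_trans) auto
  then obtain \<tau> d where p: "signed_perm n ?p \<tau> d" and d: "\<forall>j. d j = 1"
    using signed_perm_wordfin ps by blast
  have ab: "\<tau> k \<in> {1..n}" "\<tau> (Suc k) \<in> {1..n}" "\<tau> k \<noteq> \<tau> (Suc k)"
    using signed_perm_range[OF p] signed_perm_inj[OF p, of k "Suc k"] k by auto
  have "?a = eps k - eps (Suc k)" using k by (simp add: simple_coroot_def)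
  then have pa: "?p ?a = eps (\<tau> k) - eps (\<tau> (Suc k))"
    using signed_perm_eps[OF p] d k by (simp add: wordfin_diff)
  have sign: "lex_neg (?y (?p ?a)) \<longleftrightarrow> lex_neg (?p ?a)"
    unfolding pa using lex_neg_wordfin_eps_diff_iff[OF asc ab] lex_neg_eps_diff_iff[OF ab(3)] by simp
  have k': "k \<in> {1..n}" using k by simp
  have "n_inversions n (?y \<circ> wordfin n (ps @ [k])) = n_inversions n ((?y \<circ> ?p) \<circ> sfin n k)"
    by (simp add: wordfin_snoc comp_assoc)
  also have "\<dots> = (if lex_neg ((?y \<circ> ?p) ?a) then n_inversions n (?y \<circ> ?p) - 1
      else n_inversions n (?y \<circ> ?p) + 1)"
  proof (rule n_inversions_comp_sfin[OF k'])
    show "(?y \<circ> ?p) (- x) = - (?y \<circ> ?p) x" for x by (simp add: wordfin_uminus)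
    show "(?y \<circ> ?p) ?a \<noteq> 0" using wordfin_simple_coroot_nonzero[OF k', of "ys @ ps"]
      by (simp add: wordfin_append)
  qed
  also have "\<dots> = n_inversions n ?y + n_inversions n (wordfin n (ps @ [k]))"
    unfolding snoc.IH[OF ps]
    using n_inversions_wordfin_snoc[OF k', of ps] sign n_inversions_pos[OF k', of ?p] by auto
  finally show ?case .
qed

lemma min_length_in_coset_no_descent:
  assumes vs: "set vs \<subseteq> {1..n}" and ys: "set ys \<subseteq> {1..n}"
    and y: "wordfin n ys \<in> coset_WP n (wordfin n vs)"
    and min: "\<forall>z\<in>coset_WP n (wordfin n vs). lenW n (wordfin n ys) \<le> lenW n z"
    and k: "1 \<le> k" "k < n"
  shows "\<not> lex_neg (wordfin n ys (simple_coroot n k))"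
proof
  assume neg: "lex_neg (wordfin n ys (simple_coroot n k))"
  have k': "k \<in> {1..n}" using k by simp
  have ysk: "set (ys @ [k]) \<subseteq> {1..n}" using ys k by simp
  have "wordfin n (ys @ [k]) \<in> coset_WP n (wordfin n vs)"
    using y wordfin_in_Wfin[OF ysk] sfin_ones[OF k]
    unfolding coset_WP_eq[OF vs] by (simp add: wordfin_snoc)
  then have "lenW n (wordfin n ys) \<le> lenW n (wordfin n (ys @ [k]))" using min by blast
  then show False
    using neg n_inversions_wordfin_snoc[OF k', of ys] n_inversions_pos[OF k', of "wordfin n ys"]
    by (simp add: lenW_wordfin[OF ys] lenW_wordfin[OF ysk])
qed

lemma is_min_length_rep_coset_WP:
  assumes vs: "set vs \<subseteq> {1..n}" and w: "w \<in> coset_WP n (wordfin n vs)"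
    and min: "\<forall>y\<in>coset_WP n (wordfin n vs). lenW n w \<le> lenW n y"
  shows "is_min_length_rep n w (coset_WP n (wordfin n vs))"
  unfolding is_min_length_rep_def
proof (intro conjI ballI impI)
  let ?C = "coset_WP n (wordfin n vs)"
  show "w \<in> ?C" by (fact w)
  fix y assume y: "y \<in> ?C"
  then show "lenW n w \<le> lenW n y" using min by blast
  assume len: "lenW n y = lenW n w"
  obtain ys where ys: "set ys \<subseteq> {1..n}" "y = wordfin n ys"
    and y_ones: "wordfin n ys (ones n) = wordfin n vs (ones n)"
    using y unfolding coset_WP_eq[OF vs] mem_Wfin_iff by auto
  obtain ws where ws: "set ws \<subseteq> {1..n}" "w = wordfin n ws"
    and w_ones: "wordfin n ws (ones n) = wordfin n vs (ones n)"
    using w unfolding coset_WP_eq[OF vs] mem_Wfin_iff by auto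
  have asc: "\<forall>k. 1 \<le> k \<and> k < n \<longrightarrow> \<not> lex_neg (wordfin n ys (simple_coroot n k))"
    using min_length_in_coset_no_descent[OF vs ys(1)] y min len ys(2) by auto
  have "set (rev ys @ ws) \<subseteq> {1..n}" using ys ws by auto
  moreover have "wordfin n (rev ys @ ws) (ones n) = ones n"
    using w_ones by (simp add: wordfin_append y_ones[symmetric])
  ultimately have "wordfin n (rev ys @ ws) \<in> WP n" by (rule wordfin_in_WP_of_fixes_ones)
  then obtain ps where ps: "set ps \<subseteq> {1..n-1}" "wordfin n ps = wordfin n (rev ys @ ws)"
    unfolding mem_WP_iff by metis
  have w_eq: "w = y \<circ> wordfin n ps"
    unfolding ps(2) ws(2) ys(2) wordfin_append by (rule ext) simp
  have "n_inversions n w = n_inversions n y + n_inversions n (wordfin n ps)"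
    using n_inversions_comp_WP[OF asc ps(1)] w_eq ys(2) by simp
  moreover have "n_inversions n w = n_inversions n y"
    using len ws ys by (simp add: lenW_wordfin)
  moreover have "set ps \<subseteq> {1..n}" using ps(1) by (rule order_trans) auto
  ultimately have "wordfin n ps = id" using n_inversions_wordfin_eq_0_iff by simp
  then show "y = w" using w_eq by simp
qed

section \<open>A lower bound for the length from sign changes\<close>

definition sign_vec :: "nat \<Rightarrow> nat set \<Rightarrow> vec" where
  "sign_vec n S = (\<lambda>j. if j \<in> {1..n} then (if j \<in> S then -1 else 1) else 0)"

lemma lex_neg_wordfin_rev_eps:
  assumes ws: "set ws \<subseteq> {1..n}" and ones: "wordfin n ws (ones n) = sign_vec n S"
    and k: "k \<in> S" and S: "S \<subseteq> {1..n}"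
  shows "lex_neg (wordfin n (rev ws) (eps k))"
proof -
  obtain \<tau> d where w: "signed_perm n (wordfin n ws) \<tau> d"
    using signed_perm_wordfin[OF ws] by blast
  obtain j where j: "j \<in> {1..n}" "\<tau> j = k" using signed_perm_surj[OF w] k S by blast
  have "d j = -1" using signed_perm_ones[OF w j(1)] ones j(2) k S by (auto simp: sign_vec_def)
  then have "wordfin n ws (eps j) = - eps k"
    using signed_perm_eps[OF w j(1)] j(2) by (simp add: fun_eq_iff)
  then have "eps j = - wordfin n (rev ws) (eps k)"
    using wordfin_rev_wordfin[of n ws "eps j"] by (simp add: wordfin_uminus)
  then show ?thesis using lex_pos_eps[of j] by (simp add: minus_equation_iff)
qed

lemma eps_support: "{j. eps a j \<noteq> 0} = {a}"
  by (auto simp: eps_def)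

lemma eps_add_support: "a \<noteq> b \<Longrightarrow> {j. (eps a + eps b) j \<noteq> 0} = {a, b}"
  by (auto simp: eps_def)

lemma eps_diff_support: "a \<noteq> b \<Longrightarrow> {j. (eps a - eps b) j \<noteq> 0} = {a, b}"
  by (auto simp: eps_def)

lemma lex_neg_wordfin_eps_add_or_diff:
  assumes "lex_neg (wordfin n zs (eps k))"
  shows "lex_neg (wordfin n zs (eps k + eps b)) \<or> lex_neg (wordfin n zs (eps k - eps b))"
proof -
  have "wordfin n zs (eps k + eps b) + wordfin n zs (eps k - eps b)
      = wordfin n zs (eps k) + wordfin n zs (eps k)"
    by (simp only: wordfin_add[symmetric]) (simp add: fun_eq_iff)
  then show ?thesis using lex_neg_add[OF assms assms] lex_neg_add_cases by metis
qed

lemma not_in_range_eps_of_support: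
  assumes "{j. \<beta> j \<noteq> 0} = {a, b}" "a \<noteq> b"
  shows "\<beta> \<notin> range eps"
proof
  assume "\<beta> \<in> range eps"
  then obtain c where "\<beta> = eps c" by blast
  then have "{a, b} = {c}" using assms(1) eps_support by simp
  then have "a \<in> {c}" "b \<in> {c}" by blast+
  then show False using assms(2) by simp
qed

lemma n_inversions_ge_of_lex_neg_eps:
  assumes S: "S \<subseteq> {1..n}" and neg: "\<forall>k\<in>S. lex_neg (wordfin n zs (eps k))"
  shows "card S + (\<Sum>k\<in>S. n - k) \<le> n_inversions n (wordfin n zs)"
proof -
  let ?z = "wordfin n zs"
  define N where "N = {\<beta> \<in> pos_coroots n. lex_neg (?z \<beta>)}"
  define pairs where "pairs = Sigma S (\<lambda>k. {k<..n})"
  define ends where "ends \<beta> = (Min {j. \<beta> j \<noteq> 0}, Max {j. \<beta> j \<noteq> 0})" for \<beta> :: vec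
  have fin: "finite N" unfolding N_def using finite_pos_coroots by simp
  have "eps ` S \<subseteq> N \<inter> range eps"
    unfolding N_def using neg S eps_in_pos_coroots by auto
  moreover have "inj_on eps S" by (rule inj_onI) (metis eps_support singleton_inject)
  ultimately have short: "card S \<le> card (N \<inter> range eps)"
    using fin by (metis card_image card_mono finite_Int)
  have "pairs \<subseteq> ends ` (N - range eps)"
  proof
    fix p assume "p \<in> pairs"
    then obtain k b where p: "p = (k, b)" "k \<in> S" "k < b" "b \<le> n" unfolding pairs_def by auto
    have kb: "k \<in> {1..n}" "b \<in> {1..n}" "k \<noteq> b" using p S by auto
    have "lex_neg (?z (eps k + eps b)) \<or> lex_neg (?z (eps k - eps b))"
      using lex_neg_wordfin_eps_add_or_diff neg p(2) by blast
    then obtain \<beta> where \<beta>: "\<beta> = eps k + eps b \<or> \<beta> = eps k - eps b" "lex_neg (?z \<beta>)" by blast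
    have supp: "{j. \<beta> j \<noteq> 0} = {k, b}" using \<beta>(1) eps_add_support eps_diff_support kb(3) by blast
    have "\<beta> \<in> N" unfolding N_def
      using \<beta> kb p(3) eps_add_in_pos_coroots eps_diff_in_pos_coroots by auto
    moreover have "\<beta> \<notin> range eps" using not_in_range_eps_of_support[OF supp kb(3)] .
    moreover have "ends \<beta> = p" unfolding ends_def supp p(1) using p(3) by simp
    ultimately show "p \<in> ends ` (N - range eps)" by blast
  qed
  then have long: "card pairs \<le> card (N - range eps)"
    using fin by (meson card_image_le card_mono finite_Diff finite_imageI order_trans)
  have "card pairs = (\<Sum>k\<in>S. n - k)"
    unfolding pairs_def using finite_subset[OF S] by (simp add: card_SigmaI)
  moreover have "card N = card (N \<inter> range eps) + card (N - range eps)"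
    using fin by (rule card_Int_Diff)
  ultimately show ?thesis using short long unfolding n_inversions_def N_def by linarith
qed

lemma lenW_ge_of_sign_vec:
  assumes ws: "set ws \<subseteq> {1..n}" and S: "S \<subseteq> {1..n}"
    and ones: "wordfin n ws (ones n) = sign_vec n S"
  shows "card S + (\<Sum>k\<in>S. n - k) \<le> lenW n (wordfin n ws)"
proof -
  have "card S + (\<Sum>k\<in>S. n - k) \<le> n_inversions n (wordfin n (rev ws))"
    using n_inversions_ge_of_lex_neg_eps[OF S] lex_neg_wordfin_rev_eps[OF ws ones _ S] by blast
  then show ?thesis using n_inversions_wordfin_rev[OF ws] lenW_wordfin[OF ws] by simp
qed

section \<open>The element \<open>v(\<lambda>)\<close>\<close>

lemma coroot_lattice_of_support_ge:
  assumes "1 \<le> k" "k \<le> n + 1" and supp: "\<forall>j. \<xi> j \<noteq> 0 \<longrightarrow> k \<le> j \<and> j \<le> n"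
  shows "\<xi> \<in> coroot_lattice n"
  using assms(2) supp
proof (induction k arbitrary: \<xi> rule: inc_induct)
  case base
  then have "\<xi> = (\<lambda>_. 0)" by force
  then show ?case using coroot_lattice.zero by simp
next
  case (step m)
  show ?case
  proof (cases "m = n")
    case True
    define \<xi>' where "\<xi>' = (\<lambda>j. \<xi> j - \<xi> n * eps n j)"
    have "\<forall>j. \<xi>' j \<noteq> 0 \<longrightarrow> Suc m \<le> j \<and> j \<le> n"
      using step.prems True unfolding \<xi>'_def eps_def by (auto simp: le_less)
    then have "\<xi>' \<in> coroot_lattice n" by (rule step.IH)
    then have "(\<lambda>j. \<xi>' j + \<xi> n * eps n j) \<in> coroot_lattice n" by (rule coroot_lattice.long)
    then show ?thesis unfolding \<xi>'_def by simp
  next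
    case False
    then have "m < n" using step by simp
    define \<xi>' where "\<xi>' = (\<lambda>j. \<xi> j - \<xi> m * (eps m j - eps (m + 1) j))"
    have "\<forall>j. \<xi>' j \<noteq> 0 \<longrightarrow> Suc m \<le> j \<and> j \<le> n"
      using step.prems \<open>m < n\<close> unfolding \<xi>'_def eps_def by (auto simp: le_less)
    then have "\<xi>' \<in> coroot_lattice n" by (rule step.IH)
    moreover have "1 \<le> m" using assms(1) step by simp
    ultimately have "(\<lambda>j. \<xi>' j + \<xi> m * (eps m j - eps (m + 1) j)) \<in> coroot_lattice n"
      using coroot_lattice.simple \<open>m < n\<close> by blast
    then show ?thesis unfolding \<xi>'_def by simp
  qed
qed

lemma coroot_lattice_of_supported_on: "supported_on n \<xi> \<Longrightarrow> \<xi> \<in> coroot_lattice n"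
  by (rule coroot_lattice_of_support_ge[of 1]) (auto simp: supported_on_def)

lemma wordfin_upt_apply:
  assumes "1 \<le> a" "a \<le> b" "b \<le> n"
  shows "wordfin n [a..<b] y t = (if t = a then y b else if a < t \<and> t \<le> b then y (t - 1) else y t)"
proof -
  have "\<forall>a t. b - a = d \<longrightarrow> 1 \<le> a \<longrightarrow> a \<le> b \<longrightarrow>
      wordfin n [a..<b] y t = (if t = a then y b else if a < t \<and> t \<le> b then y (t - 1) else y t)"
    for d
  proof (induction d)
    case 0
    then show ?case by simp
  next
    case (Suc d)
    show ?case
    proof (intro allI impI)
      fix a t assume a: "b - a = Suc d" "1 \<le> a" "a \<le> b"
      then have "a < b" "a \<noteq> n" using assms by auto
      then have "[a..<b] = a # [Suc a..<b]" by (simp add: upt_conv_Cons)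
      then show "wordfin n [a..<b] y t =
          (if t = a then y b else if a < t \<and> t \<le> b then y (t - 1) else y t)"
        using Suc.IH a \<open>a < b\<close> \<open>a \<noteq> n\<close> by (auto simp: sfin_apply_less adj_swap_def)
    qed
  qed
  then show ?thesis using assms by blast
qed

lemma wordfin_rev_upt_apply:
  assumes "1 \<le> a" "a \<le> b" "b \<le> n"
  shows "wordfin n (rev [a..<b]) y t = (if t = b then y a else if a \<le> t \<and> t < b then y (t + 1) else y t)"
proof -
  have "\<forall>t. b \<le> n \<longrightarrow>
      wordfin n (rev [a..<b]) y t = (if t = b then y a else if a \<le> t \<and> t < b then y (t + 1) else y t)"
    using assms(2)
  proof (induction b rule: dec_induct)
    case base
    then show ?case by simp
  next
    case (step m)
    then show ?case by (auto simp: sfin_apply_less adj_swap_def)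
  qed
  then show ?thesis using assms by blast
qed

lemma s_theta_apply:
  assumes "1 \<le> n"
  shows "s_theta n y = y(1 := - y 1)"
proof
  fix t
  define z where "z = sfin n n (wordfin n (rev [1..<n]) y)"
  have z: "z s = (if s = n then - y 1 else if 1 \<le> s \<and> s < n then y (s + 1) else y s)" for s
    unfolding z_def sfin_apply_last using wordfin_rev_upt_apply[OF order_refl assms order_refl]
    by simp
  have "s_theta n y t = wordfin n [1..<n] z t"
    unfolding z_def s_theta_def wordfin_append by simp
  also have "\<dots> = (y(1 := - y 1)) t"
    unfolding wordfin_upt_apply[OF order_refl assms order_refl] using assms by (auto simp: z)
  finally show "s_theta n y t = (y(1 := - y 1)) t" .
qed

definition rho_word :: "nat \<Rightarrow> nat \<Rightarrow> nat list" where
  "rho_word n i = rev [1..<i] @ [1..<n] @ [n] @ rev [1..<n]"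

lemma wordfin_rho_word: "wordfin n (rho_word n i) = wordfin n (rev [1..<i]) \<circ> s_theta n"
  by (simp add: rho_word_def s_theta_def wordfin_append)

lemma set_rho_word: "\<lbrakk>1 \<le> i; i \<le> n\<rbrakk> \<Longrightarrow> set (rho_word n i) \<subseteq> {1..n}"
  by (auto simp: rho_word_def)

lemma wordfin_rho_word_apply:
  assumes "1 \<le> i" "i \<le> n"
  shows "wordfin n (rho_word n i) y t =
    (if t = i then - y 1 else if 1 \<le> t \<and> t < i then y (t + 1) else y t)"
  unfolding wordfin_rho_word comp_apply s_theta_apply[OF order_trans[OF assms]]
    wordfin_rev_upt_apply[OF order_refl assms]
  using assms by auto

lemma trans_apply: "trans \<xi> x = x + \<xi>"
  by (simp add: trans_def fun_eq_iff)

definition affine_map :: "elt \<Rightarrow> elt \<Rightarrow> bool" where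
  "affine_map f L \<longleftrightarrow> (\<forall>x y. L (x + y) = L x + L y) \<and> (\<forall>x. f x = L x + f 0)"

lemma affine_map_comp:
  assumes "affine_map f L" "affine_map g M"
  shows "affine_map (f \<circ> g) (L \<circ> M)"
proof -
  have L: "L (x + y) = L x + L y" and f: "f x = L x + f 0" for x y
    using assms(1) unfolding affine_map_def by blast+
  have M: "M (x + y) = M x + M y" and g: "g x = M x + g 0" for x y
    using assms(2) unfolding affine_map_def by blast+
  have "f (g x) = L (M x) + (L (g 0) + f 0)" for x
    by (metis L f g add.assoc)
  moreover have "f (g 0) = L (g 0) + f 0" by (rule f)
  ultimately show ?thesis unfolding affine_map_def by (simp add: L M)
qed

lemma affine_map_wordfin: "affine_map (wordfin n ws) (wordfin n ws)"
  unfolding affine_map_def by (simp add: wordfin_add wordfin_zero)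

lemma affine_map_s0: "affine_map (s0 n) (s_theta n)"
proof -
  have "s_theta n (x + y) = s_theta n x + s_theta n y" for x y
    by (simp add: s_theta_def wordfin_add)
  then show ?thesis
    unfolding affine_map_def s0_def comp_apply trans_apply by simp
qed

lemma wordaff_Nil [simp]: "wordaff n [] = id"
  by (simp add: wordaff_def)

lemma wordaff_Cons [simp]: "wordaff n (i # ws) = saff n i \<circ> wordaff n ws"
  by (simp add: wordaff_def)

lemma wordaff_append: "wordaff n (xs @ ys) = wordaff n xs \<circ> wordaff n ys"
  by (induction xs) auto

lemma wordaff_eq_wordfin: "0 \<notin> set ws \<Longrightarrow> wordaff n ws = wordfin n ws"
  by (induction ws) (auto simp: saff_def)

lemma rho_eq: "1 \<le> i \<Longrightarrow> rho n i = wordfin n (rev [1..<i]) \<circ> s0 n"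
  by (simp add: rho_def upt_conv_Cons wordaff_append wordaff_eq_wordfin saff_def)

lemma affine_map_rho: "1 \<le> i \<Longrightarrow> affine_map (rho n i) (wordfin n (rho_word n i))"
  unfolding rho_eq wordfin_rho_word by (intro affine_map_comp affine_map_wordfin affine_map_s0)

fun v_word :: "nat \<Rightarrow> nat list \<Rightarrow> nat list" where
  "v_word n [] = []"
| "v_word n (m # l) = v_word n l @ rho_word n m"

lemma x_lam_Nil: "x_lam n [] = id"
  by (simp add: x_lam_def)

lemma x_lam_Cons: "x_lam n (m # l) = x_lam n l \<circ> rho n m"
proof -
  have "foldr (\<circ>) fs g = foldr (\<circ>) fs id \<circ> g" for fs :: "elt list" and g
    by (induction fs) (auto simp: comp_assoc)
  then show ?thesis unfolding x_lam_def by simp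
qed

lemma affine_map_x_lam: "set l \<subseteq> {1..n} \<Longrightarrow> affine_map (x_lam n l) (wordfin n (v_word n l))"
proof (induction l)
  case Nil
  show ?case using affine_map_wordfin[of n "[]"] by (simp only: x_lam_Nil v_word.simps wordfin_Nil)
next
  case (Cons m l)
  then have "affine_map (x_lam n l \<circ> rho n m) (wordfin n (v_word n l) \<circ> wordfin n (rho_word n m))"
    by (intro affine_map_comp affine_map_rho) auto
  then show ?case by (simp only: x_lam_Cons v_word.simps wordfin_append)
qed

lemma set_v_word: "set l \<subseteq> {1..n} \<Longrightarrow> set (v_word n l) \<subseteq> {1..n}"
  by (induction l) (use set_rho_word in auto)

lemma supported_on_s0: "\<lbrakk>1 \<le> n; supported_on n x\<rbrakk> \<Longrightarrow> supported_on n (s0 n x)"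
  unfolding s0_def s_theta_def comp_apply trans_apply
  by (rule supported_on_wordfin) (auto simp: supported_on_def eps_def)

lemma supported_on_x_lam:
  "\<lbrakk>set l \<subseteq> {1..n}; supported_on n x\<rbrakk> \<Longrightarrow> supported_on n (x_lam n l x)"
proof (induction l arbitrary: x)
  case Nil
  then show ?case by (simp add: x_lam_Nil)
next
  case (Cons m l)
  then have "1 \<le> m" "m \<le> n" by auto
  then have "supported_on n (rho n m x)"
    unfolding rho_eq[OF \<open>1 \<le> m\<close>] comp_apply
    by (intro supported_on_wordfin supported_on_s0 Cons.prems) auto
  then show ?case using Cons by (simp add: x_lam_Cons)
qed

lemma linear_part_eq:
  assumes "affine_map f L" and v: "\<And>x y. v (x + y) = v x + v y" and f: "f = v \<circ> trans \<eta>"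
  shows "v = L"
proof
  fix x
  have "v 0 = 0" using v[of 0 0] by simp
  then have "f 0 = v \<eta>" unfolding f by (simp add: trans_apply)
  moreover have "f x = v x + v \<eta>" unfolding f by (simp add: trans_apply v)
  ultimately show "v x = L x" using assms(1) unfolding affine_map_def by (metis add_right_cancel)
qed

lemma v_lam_eq:
  assumes l: "set l \<subseteq> {1..n}"
  shows "v_lam n l = wordfin n (v_word n l)"
  unfolding v_lam_def
proof (rule the_equality)
  let ?V = "wordfin n (v_word n l)" and ?c = "x_lam n l 0"
  have aff: "affine_map (x_lam n l) ?V" by (rule affine_map_x_lam[OF l])
  define \<xi> where "\<xi> = - wordfin n (rev (v_word n l)) ?c"
  have "supported_on n ?c" by (rule supported_on_x_lam[OF l]) (simp add: supported_on_def)
  then have "supported_on n (wordfin n (rev (v_word n l)) ?c)"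
    using set_v_word[OF l] by (intro supported_on_wordfin) auto
  then have "\<xi> \<in> coroot_lattice n"
    unfolding \<xi>_def by (intro coroot_lattice_of_supported_on) (simp add: supported_on_def)
  moreover have "x_lam n l = ?V \<circ> trans (\<lambda>j. - \<xi> j)"
  proof
    fix x
    have "(?V \<circ> trans (\<lambda>j. - \<xi> j)) x = ?V x + ?c"
      by (simp add: trans_apply \<xi>_def wordfin_add)
    moreover have "x_lam n l x = ?V x + ?c" using aff unfolding affine_map_def by blast
    ultimately show "x_lam n l x = (?V \<circ> trans (\<lambda>j. - \<xi> j)) x" by (simp only:)
  qed
  ultimately show "?V \<in> Wfin n \<and> (\<exists>\<xi>\<in>coroot_lattice n. x_lam n l = ?V \<circ> trans (\<lambda>j. - \<xi> j))"
    using wordfin_in_Wfin[OF set_v_word[OF l]] by blast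
next
  fix v assume v: "v \<in> Wfin n \<and> (\<exists>\<xi>\<in>coroot_lattice n. x_lam n l = v \<circ> trans (\<lambda>j. - \<xi> j))"
  then obtain ws \<xi> where "v = wordfin n ws" "x_lam n l = v \<circ> trans (\<lambda>j. - \<xi> j)"
    unfolding mem_Wfin_iff by blast
  then show "v = wordfin n (v_word n l)"
    using linear_part_eq[OF affine_map_x_lam[OF l]] wordfin_add by metis
qed


lemma wordfin_v_word_apply:
  assumes "sorted_wrt (>) l" "set l \<subseteq> {1..n}" "\<forall>m\<in>set l. \<forall>t. 1 \<le> t \<and> t \<le> m \<longrightarrow> y t = 1"
  shows "wordfin n (v_word n l) y = (\<lambda>t. if t \<in> set l then -1 else y t)"
  using assms
proof (induction l arbitrary: y)
  case Nil
  then show ?case by simp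
next
  case (Cons m l)
  have m: "1 \<le> m" "m \<le> n" using Cons.prems by auto
  have y: "y t = 1" if "1 \<le> t" "t \<le> m" for t using Cons.prems(3) that by auto
  have "wordfin n (rho_word n m) y = y(m := -1)"
  proof
    fix t
    show "wordfin n (rho_word n m) y t = (y(m := -1)) t"
      unfolding wordfin_rho_word_apply[OF m] using y[of 1] y[of t] y[of "t + 1"] m by auto
  qed
  moreover have "\<forall>m'\<in>set l. \<forall>t. 1 \<le> t \<and> t \<le> m' \<longrightarrow> (y(m := -1)) t = 1"
    using Cons.prems(1) y by fastforce
  ultimately have "wordfin n (v_word n (m # l)) y = (\<lambda>t. if t \<in> set l then -1 else (y(m := -1)) t)"
    using Cons by (simp add: wordfin_append)
  then show ?case by (auto simp: fun_eq_iff)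
qed

lemma wordfin_v_word_ones:
  assumes "sorted_wrt (>) l" "set l \<subseteq> {1..n}"
  shows "wordfin n (v_word n l) (ones n) = sign_vec n (set l)"
proof -
  have "\<forall>m\<in>set l. \<forall>t. 1 \<le> t \<and> t \<le> m \<longrightarrow> ones n t = 1"
    using assms(2) by (auto simp: ones_def)
  then show ?thesis
    using wordfin_v_word_apply[OF assms] assms(2) by (auto simp: fun_eq_iff sign_vec_def ones_def)
qed

section \<open>The element \<open>u\<^sub>\<lambda>\<^sub>*\<close>\<close>

fun u_word :: "nat \<Rightarrow> nat list \<Rightarrow> nat list" where
  "u_word n [] = []"
| "u_word n (m # l) = [m..<n + 1] @ u_word n l"

lemma u_lam_dual_lam:
  assumes "set l \<subseteq> {1..n}"
  shows "u_lam n (dual_lam n l) = wordfin n (u_word n l)"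
proof -
  have "foldr (\<circ>) (map (u_k n) (map (\<lambda>k. n + 1 - k) l)) id = wordfin n (u_word n l)"
    using assms
  proof (induction l)
    case (Cons m l)
    then have "u_k n (n + 1 - m) = wordfin n [m..<n + 1]" by (simp add: u_k_def)
    then show ?case using Cons by (simp add: wordfin_append)
  qed simp
  then show ?thesis unfolding u_lam_def dual_lam_def by (simp add: rev_map)
qed

lemma set_u_word: "set l \<subseteq> {1..n} \<Longrightarrow> set (u_word n l) \<subseteq> {1..n}"
  by (induction l) auto

lemma length_u_word:
  "\<lbrakk>set l \<subseteq> {1..n}; distinct l\<rbrakk> \<Longrightarrow> length (u_word n l) = card (set l) + (\<Sum>k\<in>set l. n - k)"
  by (induction l) (auto simp: Suc_diff_le)

lemma wordfin_upt_Suc_last_apply: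
  assumes "1 \<le> m" "m \<le> n"
  shows "wordfin n [m..<n + 1] y t =
    (if t = m then - y n else if m < t \<and> t \<le> n then y (t - 1) else y t)"
proof -
  have "[m..<n + 1] = [m..<n] @ [n]" using assms by simp
  then have "wordfin n [m..<n + 1] y t = wordfin n [m..<n] (y(n := - y n)) t"
    by (simp add: wordfin_append sfin_apply_last)
  then show ?thesis unfolding wordfin_upt_apply[OF assms order_refl] using assms by auto
qed

lemma wordfin_u_word_ones:
  "\<lbrakk>sorted_wrt (>) l; set l \<subseteq> {1..n}\<rbrakk> \<Longrightarrow> wordfin n (u_word n l) (ones n) = sign_vec n (set l)"
proof (induction l)
  case Nil
  then show ?case by (auto simp: ones_def sign_vec_def fun_eq_iff)
next
  case (Cons m l)
  have m: "1 \<le> m" "m \<le> n" and less: "\<forall>x\<in>set l. x < m" using Cons.prems by auto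
  have "wordfin n (u_word n (m # l)) (ones n) = wordfin n [m..<n + 1] (sign_vec n (set l))"
    using Cons by (simp add: wordfin_append)
  also have "\<dots> = sign_vec n (set (m # l))"
    unfolding fun_eq_iff wordfin_upt_Suc_last_apply[OF m] using m less
    by (auto simp: sign_vec_def)
  finally show ?case .
qed

theorem proposition3p6:
  fixes n :: nat and lam :: "nat list"
  assumes "1 \<le> n" and "strict_partition n lam"
  shows "is_min_length_rep n (u_lam n (dual_lam n lam)) (coset_WP n (v_lam n lam))"
proof -
  have sorted: "sorted_wrt (>) lam" and lam: "set lam \<subseteq> {1..n}"
    using assms(2) unfolding strict_partition_def by auto
  then have "distinct lam" by (induction lam) auto
  let ?S = "set lam" and ?u = "wordfin n (u_word n lam)" and ?V = "wordfin n (v_word n lam)"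
  have C: "coset_WP n ?V = {w \<in> Wfin n. w (ones n) = sign_vec n ?S}"
    unfolding coset_WP_eq[OF set_v_word[OF lam]] wordfin_v_word_ones[OF sorted lam] ..
  have u: "?u \<in> coset_WP n ?V"
    unfolding C using wordfin_in_Wfin[OF set_u_word[OF lam]] wordfin_u_word_ones[OF sorted lam] by simp
  have u_short: "lenW n ?u \<le> card ?S + (\<Sum>k\<in>?S. n - k)"
    using n_inversions_le_length[OF set_u_word[OF lam]] length_u_word[OF lam \<open>distinct lam\<close>]
    by (simp add: lenW_wordfin[OF set_u_word[OF lam]])
  have others_long: "card ?S + (\<Sum>k\<in>?S. n - k) \<le> lenW n y" if "y \<in> coset_WP n ?V" for y
    using that lenW_ge_of_sign_vec[OF _ lam] unfolding C mem_Wfin_iff by auto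
  have "is_min_length_rep n ?u (coset_WP n ?V)"
    using is_min_length_rep_coset_WP[OF set_v_word[OF lam] u] u_short others_long order_trans
    by blast
  then show ?thesis unfolding u_lam_dual_lam[OF lam] v_lam_eq[OF lam] .
qed

end
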